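(* Let $\rho_0,\rho$ be Lévy measures on $(0,+\infty)$, $P_0$ an atomless probability on $\mathbb X$, and $\tilde{\boldsymbol\mu}\sim\mathrm{hCRV}(\rho,\rho_0,P_0)$. Then each marginal $\tilde\mu_i$ is infinitely active (i.e. the marginal Lévy measure $\rho_1(\cdot)=\int_0^{+\infty}P_{\mathrm{ID}(t\rho)}(\cdot)\,\mathrm d\rho_0(t)$ of $\tilde\mu_i$, restricted to $(0,+\infty)$, has infinite total mass) if and only if $$\int_0^{+\infty}\mathrm d\rho_0(t)=\int_0^{+\infty}\mathrm d\rho(t)=+\infty.$$
   Context: Let $\mathbb X$ be a Polish space. A Lévy measure on $(0,+\infty)$ is a σ-finite measure $\rho$ with $\rho((\epsilon,+\infty))<\infty$ and $\int_{(0,\epsilon)}s\,\mathrm d\rho(s)<\infty$ for all $\epsilon>0$; its Laplace exponent is $\psi(\lambda)=\int_0^{+\infty}(1-e^{-\lambda s})\,\mathrm d\rho(s)$. $\mathrm{ID}(\rho)$ is the infinitely divisible distribution on $[0,+\infty)$ with Laplace transform $e^{-\psi(\lambda)}$, with law $P_{\mathrm{ID}(\rho)}$. For a finite (possibly random) measure $m$ on $\mathbb X$, $\tilde\mu\sim\mathrm{CRM}(\rho\otimes m)$ means that (conditionally on $m$) evaluations on pairwise disjoint Borel sets are independent and $E[e^{-\lambda\tilde\mu(A)}]=e^{-m(A)\psi(\lambda)}$. $\tilde{\boldsymbol\mu}=(\tilde\mu_1,\dots,\tilde\mu_d)\sim\mathrm{hCRV}(\rho,\rho_0,P_0)$ means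 $\tilde\mu_0\sim\mathrm{CRM}(\rho_0\otimes P_0)$ and, conditionally on $\tilde\mu_0$, the $\tilde\mu_i$ are independent with $\tilde\mu_i\sim\mathrm{CRM}(\rho\otimes\tilde\mu_0)$. Each $\tilde\mu_i$ is then a completely random measure with Lévy intensity $\rho_1\otimes P_0$, $\rho_1$ as in the claim. A CRM is infinitely active if its Lévy measure on $(0,\infty)$ has infinite mass. *)

theory Defs
  imports "HOL-Probability.Probability"
begin

text \<open>A Levy measure on (0,+inf), represented as a sigma-finite Borel measure on the
reals giving no mass to (-inf,0].\<close>
definition levy_measure :: "real measure \<Rightarrow> bool" where
  "levy_measure \<rho> \<longleftrightarrow> sets \<rho> = sets borel \<and> sigma_finite_measure \<rho> \<and>
     emeasure \<rho> {..0} = 0 \<and>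
     (\<forall>\<epsilon>>0. emeasure \<rho> {\<epsilon><..} < \<infinity> \<and>
              (\<integral>\<^sup>+ s. ennreal s * indicator {0<..<\<epsilon>} s \<partial>\<rho>) < \<infinity>)"

definition laplace_exponent :: "real measure \<Rightarrow> real \<Rightarrow> real" where
  "laplace_exponent \<rho> lam = enn2real (\<integral>\<^sup>+ s. ennreal (1 - exp (- lam * s)) * indicator {0<..} s \<partial>\<rho>)"

text \<open>Q is (the law of) ID(rho): a probability on [0,+inf) with Laplace transform
exp(-psi). (Such a law exists and is unique by uniqueness of Laplace transforms.)\<close>
definition is_ID_law :: "real measure \<Rightarrow> real measure \<Rightarrow> bool" where
  "is_ID_law \<rho> Q \<longleftrightarrow> prob_space Q \<and> sets Q = sets borel \<and> emeasure Q {..<0} = 0 \<and>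
     (\<forall>lam\<ge>0. (\<integral>\<^sup>+ x. ennreal (exp (- lam * x)) \<partial>Q) = ennreal (exp (- laplace_exponent \<rho> lam)))"

definition scale_measure_real :: "real \<Rightarrow> real measure \<Rightarrow> real measure" where
  "scale_measure_real t \<rho> = scale_measure (ennreal t) \<rho>"

text \<open>Marginal Levy measure rho_1(A) = integral of P_{ID(t rho)}(A) d rho_0(t), where
Q t is the law P_{ID(t rho)}.\<close>
definition marginal_levy :: "real measure \<Rightarrow> (real \<Rightarrow> real measure) \<Rightarrow> real set \<Rightarrow> ennreal" where
  "marginal_levy \<rho>0 Q A = (\<integral>\<^sup>+ t. emeasure (Q t) A * indicator {0<..} t \<partial>\<rho>0)"

end

theory Submission
  imports Defs "HOL-Real_Asymp.Real_Asymp"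
begin

text \<open>
  The law \<open>Q t\<close> of \<open>ID(t\<rho>)\<close> lives on \<open>[0,\<infinity>)\<close>, so its atom at \<open>0\<close> is the limit of its
  Laplace transform \<open>exp (- t \<psi>(\<lambda>))\<close> as \<open>\<lambda> \<rightarrow> \<infinity>\<close>; by monotone convergence \<open>\<psi>(\<lambda>) \<rightarrow> \<rho>(0,\<infinity>)\<close>.
  If \<open>\<rho>\<close> has infinite mass the atom vanishes, so \<open>Q t (0,\<infinity>) = 1\<close> and \<open>\<rho>\<^sub>1(0,\<infinity>) = \<rho>\<^sub>0(0,\<infinity>)\<close>.
  If \<open>\<rho>\<close> has finite mass \<open>c\<close>, then \<open>Q t (0,\<infinity>) \<le> 1 - exp (- c t)\<close>, so \<open>\<rho>\<^sub>1(0,\<infinity>)\<close> is at most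
  the Laplace exponent of \<open>\<rho>\<^sub>0\<close> at \<open>c\<close>, which is finite for every Levy measure.
\<close>

lemma levy_measure_borel:
  assumes "levy_measure \<rho>"
  shows "sets \<rho> = sets borel" "space \<rho> = UNIV" "borel_measurable \<rho> = borel_measurable borel"
  using assms unfolding levy_measure_def
  by (auto intro: measurable_cong_sets dest: sets_eq_imp_space_eq)

text \<open>Unlike \<open>laplace_exponent\<close>, this keeps the value \<open>\<infinity>\<close> instead of collapsing it to \<open>0\<close>.\<close>
definition laplace_integral :: "real measure \<Rightarrow> real \<Rightarrow> ennreal" where
  "laplace_integral \<rho> lam = (\<integral>\<^sup>+ s. ennreal (1 - exp (- lam * s)) * indicator {0<..} s \<partial>\<rho>)"

lemma laplace_exponent_eq: "laplace_exponent \<rho> lam = enn2real (laplace_integral \<rho> lam)"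
  unfolding laplace_exponent_def laplace_integral_def ..

lemma one_minus_exp_le_truncated_linear:
  fixes s lam :: real
  assumes "s > 0" "lam \<ge> 0"
  shows "ennreal (1 - exp (- lam * s))
           \<le> ennreal lam * (ennreal s * indicator {0<..<2} s) + indicator {1<..} s"
proof (cases "s < 2")
  case True
  have "1 - exp (- lam * s) \<le> lam * s" using exp_ge_add_one_self[of "- lam * s"] by simp
  then show ?thesis
    using True assms by (simp add: ennreal_mult[symmetric] ennreal_leI add_increasing2)
next
  case False
  then show ?thesis by (simp add: ennreal_le_1 add_increasing)
qed

lemma laplace_integral_finite:
  assumes L: "levy_measure \<rho>" and lam: "lam \<ge> 0"
  shows "laplace_integral \<rho> lam < \<infinity>"
proof -
  note M = levy_measure_borel[OF L]
  have "laplace_integral \<rho> lam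
      \<le> (\<integral>\<^sup>+ s. ennreal lam * (ennreal s * indicator {0<..<2} s) + indicator {1<..} s \<partial>\<rho>)"
    unfolding laplace_integral_def
  proof (rule nn_integral_mono)
    show "ennreal (1 - exp (- lam * s)) * indicator {0<..} s
            \<le> ennreal lam * (ennreal s * indicator {0<..<2} s) + indicator {1<..} s" for s
      using one_minus_exp_le_truncated_linear[OF _ lam, of s] by (cases "s > 0") auto
  qed
  also have "\<dots> = ennreal lam * (\<integral>\<^sup>+ s. ennreal s * indicator {0<..<2} s \<partial>\<rho>) + emeasure \<rho> {1<..}"
    by (subst nn_integral_add) (auto simp: M nn_integral_cmult)
  also have "\<dots> < \<infinity>"
    using L unfolding levy_measure_def by (simp add: ennreal_mult_less_top)
  finally show ?thesis .
qed

lemma laplace_integral_le_emeasure: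
  assumes "levy_measure \<rho>"
  shows "laplace_integral \<rho> lam \<le> emeasure \<rho> {0<..}"
proof -
  have "laplace_integral \<rho> lam \<le> (\<integral>\<^sup>+ s. indicator {0<..} s \<partial>\<rho>)"
    unfolding laplace_integral_def
    by (rule nn_integral_mono) (auto simp: indicator_def ennreal_le_1)
  then show ?thesis
    using levy_measure_borel[OF assms] by (simp add: nn_integral_indicator)
qed

lemma mono_laplace_integral: "mono (laplace_integral \<rho>)"
  unfolding laplace_integral_def
  by (auto simp: mono_def indicator_def intro!: nn_integral_mono ennreal_leI)

lemma SUP_laplace_integral:
  assumes L: "levy_measure \<rho>"
  shows "(SUP n::nat. laplace_integral \<rho> (real n)) = emeasure \<rho> {0<..}"
proof -
  note M = levy_measure_borel[OF L]
  define f where "f n s = ennreal (1 - exp (- real n * s)) * indicator {0<..} s" for n :: nat and s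
  have inc: "incseq f"
    unfolding f_def
    by (auto simp: incseq_def le_fun_def indicator_def intro!: ennreal_leI mult_right_mono)
  have "(SUP n. f n s) = indicator {0<..} s" for s
  proof (cases "s > 0")
    case True
    have "(\<lambda>n. 1 - exp (- real n * s)) \<longlonglongrightarrow> 1" using True by real_asymp
    then have "(\<lambda>n. f n s) \<longlonglongrightarrow> 1"
      unfolding f_def using True by (auto intro!: tendsto_ennrealI[where x=1, simplified])
    with LIMSEQ_SUP[of "\<lambda>n. f n s"] inc True show ?thesis
      by (auto simp: incseq_def le_fun_def intro: LIMSEQ_unique)
  qed (simp add: f_def)
  moreover have "(SUP n. laplace_integral \<rho> (real n)) = (\<integral>\<^sup>+ s. (SUP n. f n s) \<partial>\<rho>)"
    unfolding laplace_integral_def f_def[symmetric]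
    by (rule nn_integral_monotone_convergence_SUP[symmetric]) (use inc[unfolded f_def] in \<open>auto simp: M f_def\<close>)
  ultimately show ?thesis by (simp add: M)
qed

lemma laplace_exponent_tendsto_infinity:
  assumes L: "levy_measure \<rho>" and inf: "emeasure \<rho> {0<..} = \<infinity>"
  shows "filterlim (\<lambda>n. laplace_exponent \<rho> (real n)) at_top sequentially"
  unfolding filterlim_at_top
proof
  fix Z :: real
  have "ennreal Z < (SUP n::nat. laplace_integral \<rho> (real n))"
    unfolding SUP_laplace_integral[OF L] inf by simp
  then obtain N :: nat where N: "ennreal Z < laplace_integral \<rho> (real N)"
    by (auto simp: less_SUP_iff)
  have "Z \<le> laplace_exponent \<rho> (real n)" if "n \<ge> N" for n
  proof -
    have less: "ennreal Z < laplace_integral \<rho> (real n)"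
      using N monoD[OF mono_laplace_integral, of "real N" "real n"] that
      by (simp add: less_le_trans)
    have "Z \<le> enn2real (ennreal Z)" by (cases "Z \<ge> 0") (auto simp: ennreal_neg)
    also have "\<dots> \<le> laplace_exponent \<rho> (real n)"
      unfolding laplace_exponent_eq
      using less laplace_integral_finite[OF L, of "real n"] by (intro enn2real_mono) auto
    finally show ?thesis .
  qed
  then show "\<forall>\<^sub>F n in sequentially. Z \<le> laplace_exponent \<rho> (real n)"
    by (auto simp: eventually_sequentially)
qed

lemma laplace_exponent_scale_measure:
  assumes "levy_measure \<rho>" and "t \<ge> 0"
  shows "laplace_exponent (scale_measure_real t \<rho>) lam = t * laplace_exponent \<rho> lam"
  using levy_measure_borel[OF assms(1)] assms(2)
  unfolding laplace_exponent_def scale_measure_real_def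
  by (subst nn_integral_scale_measure) (auto simp: enn2real_mult)

lemma emeasure_zero_eq_INF_laplace_transform:
  fixes Q :: "real measure"
  assumes P: "prob_space Q" and S: "sets Q = sets borel" and nonneg: "AE x in Q. x \<ge> 0"
  shows "emeasure Q {0} = (INF n::nat. \<integral>\<^sup>+ x. ennreal (exp (- real n * x)) \<partial>Q)"
proof -
  define f where "f n x = ennreal (exp (- real n * x))" for n :: nat and x :: real
  have "(\<integral>\<^sup>+ x. (INF n. f n x) \<partial>Q) = (INF n. integral\<^sup>N Q (f n))"
  proof (rule nn_integral_monotone_convergence_INF_AE')
    show "AE x in Q. f (Suc n) x \<le> f n x" for n
      using nonneg by eventually_elim (auto simp: f_def algebra_simps intro!: ennreal_leI)
    show "f n \<in> borel_measurable Q" for n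
      unfolding f_def using S by (simp add: measurable_cong_sets[OF S refl])
    show "integral\<^sup>N Q (f 0) < \<infinity>"
      using prob_space.emeasure_space_1[OF P] unfolding f_def by simp
  qed
  moreover have "(\<integral>\<^sup>+ x. (INF n. f n x) \<partial>Q) = (\<integral>\<^sup>+ x. indicator {0} x \<partial>Q)"
  proof (rule nn_integral_cong_AE)
    show "AE x in Q. (INF n. f n x) = indicator {0} x"
      using nonneg
    proof eventually_elim
      case (elim x)
      show ?case
      proof (cases "x = 0")
        case False
        with elim have x: "x > 0" by simp
        have "(\<lambda>n. exp (- real n * x)) \<longlonglongrightarrow> 0" using x by real_asymp
        then have "(\<lambda>n. f n x) \<longlonglongrightarrow> ennreal 0" unfolding f_def by (rule tendsto_ennrealI)
        moreover have "(\<lambda>n. f n x) \<longlonglongrightarrow> (INF n. f n x)"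
          using x by (intro LIMSEQ_INF) (auto simp: decseq_def f_def intro!: ennreal_leI mult_right_mono)
        ultimately show ?thesis using False LIMSEQ_unique by fastforce
      qed (simp add: f_def)
    qed
  qed
  moreover have "(\<integral>\<^sup>+ x. indicator {0} x \<partial>Q) = emeasure Q {0}"
    using S by (simp add: nn_integral_indicator)
  ultimately show ?thesis
    unfolding f_def by simp
qed

lemma is_ID_law_emeasure_zero:
  assumes "is_ID_law R Q"
  shows "emeasure Q {0} = (INF n::nat. ennreal (exp (- laplace_exponent R (real n))))"
proof -
  have S: "sets Q = sets borel" and "prob_space Q" "emeasure Q {..<0} = 0"
    using assms unfolding is_ID_law_def by auto
  moreover have "AE x in Q. x \<ge> 0"
    by (rule AE_I'[of "{..<0}"]) (auto simp: S \<open>emeasure Q {..<0} = 0\<close>)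
  ultimately show ?thesis
    using assms unfolding is_ID_law_def by (simp add: emeasure_zero_eq_INF_laplace_transform)
qed

lemma is_ID_law_emeasure_positive:
  assumes "is_ID_law R Q"
  shows "emeasure Q {0<..} = 1 - emeasure Q {0}"
proof -
  have P: "prob_space Q" and S: "sets Q = sets borel" and N: "emeasure Q {..<0} = 0"
    using assms unfolding is_ID_law_def by auto
  have "emeasure Q {0<..} + emeasure Q {0} + emeasure Q {..<0}
          = emeasure Q ({0<..} \<union> {0} \<union> {..<0})"
    by (subst plus_emeasure, simp_all add: S)+ auto
  also have "{0<..} \<union> {0} \<union> {..<0::real} = space Q"
    using S by (auto dest: sets_eq_imp_space_eq)
  finally have sum: "emeasure Q {0<..} + emeasure Q {0} = 1"
    using N prob_space.emeasure_space_1[OF P] by simp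
  have "emeasure Q {0} \<noteq> \<top>"
    using finite_measure.emeasure_finite[OF prob_space.finite_measure[OF P]] by simp
  from ennreal_add_diff_cancel_right[OF this, of "emeasure Q {0<..}"] show ?thesis
    unfolding sum by simp
qed

lemma ID_law_scale_emeasure_zero:
  assumes "levy_measure \<rho>" and "t > 0" and "is_ID_law (scale_measure_real t \<rho>) Q"
  shows "emeasure Q {0} = (INF n::nat. ennreal (exp (- t * laplace_exponent \<rho> (real n))))"
  using is_ID_law_emeasure_zero[OF assms(3)] laplace_exponent_scale_measure[OF assms(1)] assms(2)
  by simp

lemma ID_law_scale_emeasure_zero_eq_0:
  assumes L: "levy_measure \<rho>" and t: "t > 0" and Q: "is_ID_law (scale_measure_real t \<rho>) Q"
    and inf: "emeasure \<rho> {0<..} = \<infinity>"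
  shows "emeasure Q {0} = 0"
proof -
  have "((\<lambda>x. exp (- t * x)) \<longlongrightarrow> 0) at_top" using t by real_asymp
  then have "(\<lambda>n. exp (- t * laplace_exponent \<rho> (real n))) \<longlonglongrightarrow> 0"
    by (rule filterlim_compose[OF _ laplace_exponent_tendsto_infinity[OF L inf]])
  then have "(\<lambda>n. ennreal (exp (- t * laplace_exponent \<rho> (real n)))) \<longlonglongrightarrow> ennreal 0"
    by (rule tendsto_ennrealI)
  moreover have "emeasure Q {0} \<le> ennreal (exp (- t * laplace_exponent \<rho> (real n)))" for n
    unfolding ID_law_scale_emeasure_zero[OF L t Q] by (rule INF_lower) simp
  ultimately have "emeasure Q {0} \<le> ennreal 0"
    by (intro LIMSEQ_le_const) auto
  then show ?thesis by simp
qed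

lemma ID_law_scale_emeasure_zero_ge:
  assumes L: "levy_measure \<rho>" and t: "t > 0" and Q: "is_ID_law (scale_measure_real t \<rho>) Q"
    and fin: "emeasure \<rho> {0<..} < \<infinity>"
  shows "ennreal (exp (- t * enn2real (emeasure \<rho> {0<..}))) \<le> emeasure Q {0}"
  unfolding ID_law_scale_emeasure_zero[OF L t Q]
proof (rule INF_greatest)
  fix n :: nat
  have "laplace_exponent \<rho> (real n) \<le> enn2real (emeasure \<rho> {0<..})"
    unfolding laplace_exponent_eq using fin laplace_integral_le_emeasure[OF L]
    by (intro enn2real_mono) auto
  then show "ennreal (exp (- t * enn2real (emeasure \<rho> {0<..})))
               \<le> ennreal (exp (- t * laplace_exponent \<rho> (real n)))"
    using t by (intro ennreal_leI) simp
qed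

lemma marginal_levy_eq_emeasure:
  assumes L0: "levy_measure \<rho>0" and L: "levy_measure \<rho>"
    and Q: "\<And>t. t > 0 \<Longrightarrow> is_ID_law (scale_measure_real t \<rho>) (Q t)"
    and inf: "emeasure \<rho> {0<..} = \<infinity>"
  shows "marginal_levy \<rho>0 Q {0<..} = emeasure \<rho>0 {0<..}"
proof -
  have "emeasure (Q t) {0<..} = 1" if "t > 0" for t
    using is_ID_law_emeasure_positive[OF Q[OF that]]
      ID_law_scale_emeasure_zero_eq_0[OF L that Q[OF that] inf] by simp
  then have "marginal_levy \<rho>0 Q {0<..} = (\<integral>\<^sup>+ t. indicator {0<..} t \<partial>\<rho>0)"
    unfolding marginal_levy_def by (intro nn_integral_cong) (simp add: indicator_def)
  then show ?thesis
    using levy_measure_borel[OF L0] by (simp add: nn_integral_indicator)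
qed

lemma marginal_levy_le_laplace_integral:
  assumes L: "levy_measure \<rho>"
    and Q: "\<And>t. t > 0 \<Longrightarrow> is_ID_law (scale_measure_real t \<rho>) (Q t)"
    and fin: "emeasure \<rho> {0<..} < \<infinity>"
  shows "marginal_levy \<rho>0 Q {0<..} \<le> laplace_integral \<rho>0 (enn2real (emeasure \<rho> {0<..}))"
  unfolding marginal_levy_def laplace_integral_def
proof (rule nn_integral_mono)
  fix t
  let ?c = "enn2real (emeasure \<rho> {0<..})"
  show "emeasure (Q t) {0<..} * indicator {0<..} t \<le> ennreal (1 - exp (- ?c * t)) * indicator {0<..} t"
  proof (cases "t > 0")
    case True
    have "emeasure (Q t) {0<..} = 1 - emeasure (Q t) {0}"
      by (rule is_ID_law_emeasure_positive[OF Q[OF True]])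
    also have "\<dots> \<le> 1 - ennreal (exp (- t * ?c))"
      by (rule ennreal_mono_minus[OF ID_law_scale_emeasure_zero_ge[OF L True Q[OF True] fin]])
    also have "\<dots> = ennreal (1 - exp (- ?c * t))"
      by (simp add: ennreal_minus[symmetric] mult.commute)
    finally show ?thesis using True by simp
  qed simp
qed

theorem mainTheorem4:
  fixes \<rho>0 \<rho> :: "real measure" and Q :: "real \<Rightarrow> real measure"
  assumes "levy_measure \<rho>0" and "levy_measure \<rho>"
    and "\<And>t. t > 0 \<Longrightarrow> is_ID_law (scale_measure_real t \<rho>) (Q t)"
  shows "marginal_levy \<rho>0 Q {0<..} = \<infinity> \<longleftrightarrow>
         emeasure \<rho>0 {0<..} = \<infinity> \<and> emeasure \<rho> {0<..} = \<infinity>"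
proof (cases "emeasure \<rho> {0<..} = \<infinity>")
  case True
  then show ?thesis using marginal_levy_eq_emeasure[OF assms True] by simp
next
  case False
  then have "marginal_levy \<rho>0 Q {0<..} < \<infinity>"
    using marginal_levy_le_laplace_integral[OF assms(2,3), of \<rho>0]
      laplace_integral_finite[OF assms(1) enn2real_nonneg]
    by (simp add: less_top le_less_trans)
  with False show ?thesis by simp
qed

end
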